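(* Let $p$ be a prime and $G$ a residually $p$-finite group. Then every cyclic subgroup of $G$ is topologically $p$-embedded in $G$.
   Context: A group is $p$-finite if its order is a finite power of $p$; a group $G$ is residually $p$-finite if for every $g\ne 1$ in $G$ there is a $p$-finite quotient of $G$ in which the image of $g$ is nontrivial. A subgroup $H$ of $G$ is topologically $p$-embedded in $G$ if the subspace topology on $H$ induced by the pro-$p$ topology on $G$ equals the pro-$p$ topology of $H$; equivalently, for every normal subgroup $N$ of $H$ of $p$-power index there is a normal subgroup $M$ of $G$ of $p$-power index with $M\cap H\le N$. *)

theory Defs
  imports "HOL-Algebra.Algebra"
begin

definition p_finite :: "nat \<Rightarrow> ('a, 'b) monoid_scheme \<Rightarrow> bool" where
  "p_finite p H \<longleftrightarrow> finite (carrier H) \<and> (\<exists>k::nat. card (carrier H) = p ^ k)"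

definition p_index_normal :: "nat \<Rightarrow> ('a, 'b) monoid_scheme \<Rightarrow> 'a set \<Rightarrow> bool" where
  "p_index_normal p G N \<longleftrightarrow> N \<lhd> G \<and> p_finite p (G Mod N)"

definition residually_p_finite :: "nat \<Rightarrow> ('a, 'b) monoid_scheme \<Rightarrow> bool" where
  "residually_p_finite p G \<longleftrightarrow>
     (\<forall>g \<in> carrier G. g \<noteq> \<one>\<^bsub>G\<^esub> \<longrightarrow>
        (\<exists>N. N \<lhd> G \<and> p_finite p (G Mod N) \<and> N #>\<^bsub>G\<^esub> g \<noteq> \<one>\<^bsub>G Mod N\<^esub>))"

definition top_p_embedded :: "nat \<Rightarrow> ('a, 'b) monoid_scheme \<Rightarrow> 'a set \<Rightarrow> bool" where
  "top_p_embedded p G H \<longleftrightarrow>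
     (\<forall>N. p_index_normal p (G\<lparr>carrier := H\<rparr>) N \<longrightarrow>
        (\<exists>M. p_index_normal p G M \<and> M \<inter> H \<subseteq> N))"

end

theory Submission
  imports Defs
begin

text \<open>If \<open>N\<close> is normal of \<open>p\<close>-power index in a group containing \<open>g\<close>, the image of \<open>g\<close> in the
  \<open>p\<close>-finite quotient has order \<open>p^c\<close>, so \<open>g^i \<in> N\<close> exactly when \<open>p^c\<close> divides \<open>i\<close>. Applied in
  \<open>\<langle>g\<rangle>\<close> this describes \<open>N\<close> by its exponent \<open>c\<close>. If \<open>c = 0\<close> take \<open>M = G\<close>. Otherwise
  \<open>g^(p^(c-1)) \<notin> N\<close> is nontrivial, so residual \<open>p\<close>-finiteness yields \<open>M\<close> of \<open>p\<close>-power index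
  in \<open>G\<close> avoiding it; the exponent of \<open>M\<close> then exceeds \<open>c - 1\<close>, whence \<open>M \<inter> \<langle>g\<rangle> \<subseteq> N\<close>.\<close>

lemma (in normal) int_pow_mem_iff_ord_dvd:
  assumes x: "x \<in> carrier G"
  shows "x [^] (i::int) \<in> H \<longleftrightarrow> int (group.ord (G Mod H) (H #> x)) dvd i"
proof -
  have hom: "(\<lambda>a. H #> a) \<in> hom G (G Mod H)" by (rule r_coset_hom_Mod)
  have Hx: "H #> x \<in> carrier (G Mod H)" using hom x by (auto simp: hom_def)
  have "H #> (x [^] i) = (H #> x) [^]\<^bsub>G Mod H\<^esub> i"
    using hom_int_pow[OF hom x is_group factorgroup_is_group] .
  moreover have "x [^] i \<in> H \<longleftrightarrow> H #> (x [^] i) = H"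
    using coset_join1[OF _ _ subgroup_axioms] coset_join2[OF _ subgroup_axioms] x by auto
  ultimately show ?thesis
    using group.int_pow_eq_id[OF factorgroup_is_group Hx] by simp
qed

lemma p_finite_ord_prime_power:
  assumes p: "Factorial_Ring.prime p" and K: "group K" and "p_finite p K" and x: "x \<in> carrier K"
  obtains j where "group.ord K x = p ^ j"
proof -
  obtain l where "card (carrier K) = p ^ l" using \<open>p_finite p K\<close> unfolding p_finite_def by blast
  then have "group.ord K x dvd p ^ l"
    using group.ord_dvd_group_order[OF K x] by (simp add: order_def)
  then show ?thesis using that divides_primepow_nat[OF p] by blast
qed

lemma p_index_normal_int_pow_mem_iff:
  fixes G :: "('a, 'b) monoid_scheme"
  assumes p: "Factorial_Ring.prime p" and N: "p_index_normal p G N" and x: "x \<in> carrier G"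
  obtains j where "\<And>i::int. x [^]\<^bsub>G\<^esub> i \<in> N \<longleftrightarrow> int (p ^ j) dvd i"
proof -
  interpret normal N G using N unfolding p_index_normal_def by simp
  have "N #>\<^bsub>G\<^esub> x \<in> carrier (G Mod N)" using x unfolding FactGroup_def RCOSETS_def by auto
  then obtain j where "group.ord (G Mod N) (N #>\<^bsub>G\<^esub> x) = p ^ j"
    using p_finite_ord_prime_power[OF p factorgroup_is_group] N
    unfolding p_index_normal_def by blast
  then show ?thesis using that int_pow_mem_iff_ord_dvd[OF x] by simp
qed

lemma (in group) p_index_normal_carrier: "p_index_normal p G (carrier G)"
proof -
  have "G Mod carrier G \<cong> G\<lparr>carrier := {\<one>}\<rparr>"
    using self_factor_iso unfolding is_iso_def by blast
  then have "finite (carrier (G Mod carrier G)) \<and> card (carrier (G Mod carrier G)) = p ^ 0"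
    using iso_finite iso_same_card by fastforce
  then show ?thesis
    unfolding p_index_normal_def p_finite_def using normal_self by blast
qed

lemma residually_p_finite_avoid:
  fixes G :: "('a, 'b) monoid_scheme"
  assumes "residually_p_finite p G" "group G" "x \<in> carrier G" "x \<noteq> \<one>\<^bsub>G\<^esub>"
  obtains M where "p_index_normal p G M" "x \<notin> M"
proof -
  interpret group G by fact
  obtain M where M: "M \<lhd> G" "p_finite p (G Mod M)" "M #>\<^bsub>G\<^esub> x \<noteq> \<one>\<^bsub>G Mod M\<^esub>"
    using assms unfolding residually_p_finite_def by blast
  then have "x \<notin> M"
    using coset_join2[OF \<open>x \<in> carrier G\<close>] normal_imp_subgroup by fastforce
  then show ?thesis using that M unfolding p_index_normal_def by blast
qed

lemma residually_p_finite_power_separation: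
  fixes G :: "('a, 'b) monoid_scheme"
  assumes p: "Factorial_Ring.prime p" and G: "group G" and res: "residually_p_finite p G"
    and g: "g \<in> carrier G" and nontrivial: "g [^]\<^bsub>G\<^esub> (p ^ k) \<noteq> \<one>\<^bsub>G\<^esub>"
  obtains M where "p_index_normal p G M" "\<And>i::int. g [^]\<^bsub>G\<^esub> i \<in> M \<Longrightarrow> int (p ^ Suc k) dvd i"
proof -
  interpret group G by (rule G)
  obtain M where M: "p_index_normal p G M" "g [^]\<^bsub>G\<^esub> (p ^ k) \<notin> M"
    using residually_p_finite_avoid[OF res G _ nontrivial] g by auto
  obtain j where j: "\<And>i::int. g [^]\<^bsub>G\<^esub> i \<in> M \<longleftrightarrow> int (p ^ j) dvd i"
    using p_index_normal_int_pow_mem_iff[OF p M(1) g] by blast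
  have "\<not> p ^ j dvd p ^ k"
    using j[of "int (p ^ k)"] M(2) by (metis int_pow_int of_nat_dvd_iff)
  then have "Suc k \<le> j"
    using prime_gt_1_nat[OF p] by (simp add: dvd_power_iff_le)
  then have "p ^ Suc k dvd p ^ j" by (rule le_imp_power_dvd)
  then show ?thesis
    using that M(1) j by (meson dvd_trans of_nat_dvd_iff)
qed

theorem lemma3p8:
  fixes G :: "('a, 'b) monoid_scheme" and p :: nat
  assumes "Factorial_Ring.prime p"
    and "group G"
    and "residually_p_finite p G"
    and "g \<in> carrier G"
  shows "top_p_embedded p G (generate G {g})"
proof -
  interpret group G by (rule assms(2))
  define H where "H = generate G {g}"
  have H: "subgroup H G" "g \<in> H"
    unfolding H_def using assms(4) by (auto intro: generate_is_subgroup generate.incl)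
  show ?thesis unfolding top_p_embedded_def H_def[symmetric]
  proof (intro allI impI)
    fix N assume N: "p_index_normal p (G\<lparr>carrier := H\<rparr>) N"
    obtain c where c: "\<And>i::int. g [^]\<^bsub>G\<^esub> i \<in> N \<longleftrightarrow> int (p ^ c) dvd i"
      using p_index_normal_int_pow_mem_iff[OF assms(1) N, of g] H int_pow_consistent by auto
    obtain M where M: "p_index_normal p G M" "\<And>i::int. g [^]\<^bsub>G\<^esub> i \<in> M \<Longrightarrow> int (p ^ c) dvd i"
    proof (cases c)
      case 0
      then show ?thesis using that[OF p_index_normal_carrier] by simp
    next
      case (Suc k)
      have "\<not> p ^ Suc k dvd p ^ k"
        using prime_gt_1_nat[OF assms(1)] by (simp add: dvd_power_iff_le)
      then have "g [^]\<^bsub>G\<^esub> int (p ^ k) \<notin> N"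
        using c[of "int (p ^ k)"] Suc by (metis of_nat_dvd_iff)
      moreover have "\<one>\<^bsub>G\<^esub> \<in> N" using c[of 0] by simp
      ultimately have "g [^]\<^bsub>G\<^esub> (p ^ k) \<noteq> \<one>\<^bsub>G\<^esub>" by (metis int_pow_int)
      then show ?thesis
        using that residually_p_finite_power_separation[OF assms, of k] Suc by auto
    qed
    have "M \<inter> H \<subseteq> N"
      using M(2) c generate_pow[OF assms(4)] unfolding H_def by auto
    with M(1) show "\<exists>M. p_index_normal p G M \<and> M \<inter> H \<subseteq> N" by blast
  qed
qed

end
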